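(* Let $X$ be a fake weighted projective space with weights $(\lambda_0,\ldots,\lambda_n)$. If $X$ is Gorenstein, then $\mathbb{P}(\lambda_0,\ldots,\lambda_n)$ is Gorenstein.
   Context: Let $N\cong\mathbb{Z}^n$ be a lattice and $N_\mathbb{R}:=N\otimes_\mathbb{Z}\mathbb{R}$. Let $\rho_0,\ldots,\rho_n\in N$ be primitive lattice points with $N_\mathbb{R}=\sum_{i=0}^n\mathbb{R}_{\geq0}\rho_i$. There are positive integers $\lambda_0,\ldots,\lambda_n$ with $\gcd\{\lambda_0,\ldots,\lambda_n\}=1$, unique up to order, such that $\sum_{i=0}^n\lambda_i\rho_i=0$. The cones $\sigma_i$ generated by $\{\rho_j: j\neq i\}$, $i=0,\ldots,n$, generate a complete simplicial fan; the associated projective toric variety $X$ is called a fake weighted projective space with weights $(\lambda_0,\ldots,\lambda_n)$. $\mathbb{P}(\lambda_0,\ldots,\lambda_n)$ denotes the usual weighted projective space with these weights. *)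

theory Defs
  imports Complex_Main
begin

text \<open>The lattice N = Z^n is modelled by functions nat => int, only the
components j < n being relevant. A configuration of rays is a family
rho :: nat => (nat => int), only rho 0, ..., rho n being relevant.\<close>

definition primitive_vec :: "nat \<Rightarrow> (nat \<Rightarrow> int) \<Rightarrow> bool" where
  "primitive_vec n v \<longleftrightarrow> (\<forall>d::int. (\<forall>j<n. d dvd v j) \<longrightarrow> d dvd 1)"

definition positively_spanning :: "nat \<Rightarrow> (nat \<Rightarrow> nat \<Rightarrow> int) \<Rightarrow> bool" where
  "positively_spanning n rho \<longleftrightarrow>
     (\<forall>v :: nat \<Rightarrow> real. \<exists>c :: nat \<Rightarrow> real. (\<forall>i\<le>n. c i \<ge> 0) \<and>
        (\<forall>j<n. v j = (\<Sum>i\<le>n. c i * real_of_int (rho i j))))"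

definition fwps_rays :: "nat \<Rightarrow> (nat \<Rightarrow> nat \<Rightarrow> int) \<Rightarrow> bool" where
  "fwps_rays n rho \<longleftrightarrow> (\<forall>i\<le>n. primitive_vec n (rho i)) \<and> positively_spanning n rho"

definition fwps_weights :: "nat \<Rightarrow> (nat \<Rightarrow> nat \<Rightarrow> int) \<Rightarrow> (nat \<Rightarrow> nat) \<Rightarrow> bool" where
  "fwps_weights n rho lam \<longleftrightarrow>
     (\<forall>i\<le>n. lam i > 0) \<and> Gcd (lam ` {..n}) = 1 \<and>
     (\<forall>j<n. (\<Sum>i\<le>n. int (lam i) * rho i j) = 0)"

text \<open>Gorenstein (K_X Cartier) for the simplicial toric variety whose maximal cones
are sigma_i = cone(rho_k : k \<noteq> i): for each i there is u in M = Hom(N,Z) with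
u(rho_k) = 1 for all k \<noteq> i.\<close>
definition fwps_gorenstein :: "nat \<Rightarrow> (nat \<Rightarrow> nat \<Rightarrow> int) \<Rightarrow> bool" where
  "fwps_gorenstein n rho \<longleftrightarrow>
     (\<forall>i\<le>n. \<exists>u :: nat \<Rightarrow> int. \<forall>k\<le>n. k \<noteq> i \<longrightarrow> (\<Sum>j<n. u j * rho k j) = 1)"

text \<open>The weighted projective space P(lam_0..lam_n) is the toric variety with lattice
Z^(n+1)/Z(lam_0,..,lam_n) and rays the images of the standard basis vectors e_k.
Dual lattice = linear forms u on Z^(n+1) with u(lam) = 0. Gorenstein: for each i
there is such u with u(e_k) = 1 for all k \<noteq> i.\<close>
definition wps_gorenstein :: "nat \<Rightarrow> (nat \<Rightarrow> nat) \<Rightarrow> bool" where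
  "wps_gorenstein n lam \<longleftrightarrow>
     (\<forall>i\<le>n. \<exists>u :: nat \<Rightarrow> int. (\<Sum>k\<le>n. u k * int (lam k)) = 0 \<and>
        (\<forall>k\<le>n. k \<noteq> i \<longrightarrow> u k = 1))"

end

theory Submission
  imports Defs
begin

(* The ray map Z^(n+1) -> N, e_k |-> rho_k, sends the weight vector
   lam = (lam_0, ..., lam_n) to sum_k lam_k rho_k = 0.  Hence every linear form u on N
   pulls back to the linear form  w(e_k) = <u, rho_k>  on Z^(n+1), and w(lam) = 0, i.e.
   w is a linear form on the lattice Z^(n+1)/Z lam of P(lam_0, ..., lam_n).
   If X is Gorenstein, for each i there is u with <u, rho_k> = 1 for all k <> i; its
   pullback w then satisfies w(e_k) = 1 for all k <> i, which is exactly the Gorenstein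
   condition for the cone sigma_i of P(lam_0, ..., lam_n). *)

lemma pullback_pairing:
  fixes u :: "nat \<Rightarrow> 'a::comm_semiring_1" and r :: "nat \<Rightarrow> nat \<Rightarrow> 'a"
  shows "(\<Sum>k\<le>n. (\<Sum>j<m. u j * r k j) * c k) = (\<Sum>j<m. u j * (\<Sum>k\<le>n. c k * r k j))"
proof -
  have "(\<Sum>k\<le>n. (\<Sum>j<m. u j * r k j) * c k) = (\<Sum>k\<le>n. \<Sum>j<m. u j * (c k * r k j))"
    unfolding sum_distrib_right by (simp add: mult_ac)
  also have "\<dots> = (\<Sum>j<m. \<Sum>k\<le>n. u j * (c k * r k j))"
    by (rule sum.swap)
  also have "\<dots> = (\<Sum>j<m. u j * (\<Sum>k\<le>n. c k * r k j))"
    by (simp add: sum_distrib_left)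
  finally show ?thesis .
qed

lemma pullback_kills_weights:
  assumes "fwps_weights n rho lam"
  shows "(\<Sum>k\<le>n. (\<Sum>j<n. u j * rho k j) * int (lam k)) = 0"
proof -
  have relation: "(\<Sum>k\<le>n. int (lam k) * rho k j) = 0" if "j < n" for j
    using assms that unfolding fwps_weights_def by blast
  have "(\<Sum>k\<le>n. (\<Sum>j<n. u j * rho k j) * int (lam k))
      = (\<Sum>j<n. u j * (\<Sum>k\<le>n. int (lam k) * rho k j))"
    by (rule pullback_pairing)
  also have "\<dots> = 0"
    using relation by simp
  finally show ?thesis .
qed

theorem mainTheorem4:
  fixes n :: nat and rho :: "nat \<Rightarrow> nat \<Rightarrow> int" and lam :: "nat \<Rightarrow> nat"
  assumes "fwps_rays n rho"
    and "fwps_weights n rho lam"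
    and "fwps_gorenstein n rho"
  shows "wps_gorenstein n lam"
  unfolding wps_gorenstein_def
proof (intro allI impI)
  fix i assume "i \<le> n"
  with assms(3) obtain u :: "nat \<Rightarrow> int"
    where u: "\<forall>k\<le>n. k \<noteq> i \<longrightarrow> (\<Sum>j<n. u j * rho k j) = 1"
    unfolding fwps_gorenstein_def by blast
  define w where "w k = (\<Sum>j<n. u j * rho k j)" for k
  have "(\<Sum>k\<le>n. w k * int (lam k)) = 0"
    unfolding w_def using assms(2) by (rule pullback_kills_weights)
  moreover have "\<forall>k\<le>n. k \<noteq> i \<longrightarrow> w k = 1"
    using u unfolding w_def by blast
  ultimately show "\<exists>w :: nat \<Rightarrow> int. (\<Sum>k\<le>n. w k * int (lam k)) = 0 \<and>
      (\<forall>k\<le>n. k \<noteq> i \<longrightarrow> w k = 1)"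
    by blast
qed

end
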